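(* Let $g>0$ and consider the one-dimensional shallow water system $$\partial_t h+\partial_x q=0,\qquad \partial_t q+\partial_x\Big(\frac{q^2}{h}+\tfrac12 g h^2\Big)=0,$$ with state $u=(h,q)$, $h>0$, $q=hv$. Let $u_l=(h_l,q_l)$ be a torrential state with $\mathcal{F}_l>1$ and $u_r=(h_r,q_r)$ a fluvial state with $|\mathcal{F}_r|<1$, where $\mathcal{F}=v/\sqrt{gh}$. Suppose that either $\mathcal{N}(u_l)\cap\mathcal{P}(u_r)$ intersects the subcritical set $\{(h,q):h>0,\ -h\sqrt{gh}\le q\le h\sqrt{gh}\}$, or $u_l\in\mathcal{P}(u_r)$. Then there exist states $u_1^b=(h_1^b,q_1^b)$, $u_2^b=(h_2^b,q_2^b)$ with $h_1^b,h_2^b>0$ such that $$u_1^b\in\mathcal{N}(u_l),\qquad u_2^b\in\mathcal{P}(u_r),\qquad q_1^b=q_2^b,\qquad h_1^b=h_2^b.$$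
   Context: This models a junction between one incoming canal (canal 1, initial constant state $u_l$) and one outgoing canal (canal 2, initial constant state $u_r$), with conservation of mass $q_1^b=q_2^b$ and equal water heights $h_1^b=h_2^b$ at the junction. The Froude number of a state $(h,q)$ is $\mathcal{F}=v/\sqrt{gh}=q/(h\sqrt{gh})$; a state is subcritical (fluvial) if $|\mathcal{F}|<1$ and supercritical (torrential) if $|\mathcal{F}|>1$. Riemann problems for the system are solved in the standard (Lax) sense, by a 1-wave and a 2-wave, each an admissible shock or a centered rarefaction (eigenvalues $\lambda_{1,2}=v\mp\sqrt{gh}$). For a state $u_l$, $\mathcal{N}(u_l)$ is the set of states $\hat u$ such that the solution of the Riemann problem with left state $u_l$ (for $x<0$) and right state $\hat u$ (for $x>0$) contains only waves with non-positive speed. For a state $u_r$, $\mathcal{P}(u_r)$ is the set of states $\tilde u$ such that the solution of the Riemann problem with left state $\tilde u$ and right state $u_r$ contains only waves with non-negative speed. *)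

theory Defs
  imports Complex_Main
begin

definition lam1 :: "real \<Rightarrow> real \<Rightarrow> real \<Rightarrow> real" where
  "lam1 g h q = q / h - sqrt (g * h)"

definition lam2 :: "real \<Rightarrow> real \<Rightarrow> real \<Rightarrow> real" where
  "lam2 g h q = q / h + sqrt (g * h)"

definition froude :: "real \<Rightarrow> real \<Rightarrow> real \<Rightarrow> real" where
  "froude g h q = (q / h) / sqrt (g * h)"

text \<open>wave1 g ul um S: the left state ul is connected to the right state um by an
  admissible (Lax) 1-wave (trivial, centered 1-rarefaction, or Lax 1-shock); S is the
  set of speeds occupied by the wave (empty for the trivial wave, the fan interval
  for a rarefaction, the singleton shock speed for a shock).\<close>

definition wave1 :: "real \<Rightarrow> real \<times> real \<Rightarrow> real \<times> real \<Rightarrow> real set \<Rightarrow> bool" where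
  "wave1 g ul um S \<longleftrightarrow> (case ul of (hl, ql) \<Rightarrow> case um of (hm, qm) \<Rightarrow>
     (hm = hl \<and> qm = ql \<and> S = {})
   \<or> (hm < hl \<and> qm / hm = ql / hl + 2 * (sqrt (g * hl) - sqrt (g * hm))
        \<and> S = {lam1 g hl ql .. lam1 g hm qm})
   \<or> (hl < hm \<and> qm / hm = ql / hl - (hm - hl) * sqrt (g * (hm + hl) / (2 * hm * hl))
        \<and> S = {(qm - ql) / (hm - hl)}))"

definition wave2 :: "real \<Rightarrow> real \<times> real \<Rightarrow> real \<times> real \<Rightarrow> real set \<Rightarrow> bool" where
  "wave2 g um ur S \<longleftrightarrow> (case um of (hm, qm) \<Rightarrow> case ur of (hr, qr) \<Rightarrow>
     (hr = hm \<and> qr = qm \<and> S = {})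
   \<or> (hm < hr \<and> qr / hr = qm / hm + 2 * (sqrt (g * hr) - sqrt (g * hm))
        \<and> S = {lam2 g hm qm .. lam2 g hr qr})
   \<or> (hr < hm \<and> qr / hr = qm / hm - (hm - hr) * sqrt (g * (hm + hr) / (2 * hm * hr))
        \<and> S = {(qr - qm) / (hr - hm)}))"

definition Nset :: "real \<Rightarrow> real \<times> real \<Rightarrow> (real \<times> real) set" where
  "Nset g ul = {u. fst u > 0 \<and> (\<exists>um S1 S2. fst um > 0 \<and> wave1 g ul um S1 \<and> wave2 g um u S2
        \<and> (\<forall>s \<in> S1 \<union> S2. s \<le> 0))}"

definition Pset :: "real \<Rightarrow> real \<times> real \<Rightarrow> (real \<times> real) set" where
  "Pset g ur = {u. fst u > 0 \<and> (\<exists>um S1 S2. fst um > 0 \<and> wave1 g u um S1 \<and> wave2 g um ur S2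
        \<and> (\<forall>s \<in> S1 \<union> S2. 0 \<le> s))}"

end

theory Submission
  imports Defs
begin

lemma wave1_trivial: "wave1 g u u {}"
  by (cases u) (simp add: wave1_def)

lemma wave2_trivial: "wave2 g u u {}"
  by (cases u) (simp add: wave2_def)

lemma mem_Nset_self:
  assumes "fst u > 0"
  shows "u \<in> Nset g u"
  unfolding Nset_def using assms wave1_trivial wave2_trivial by blast

theorem mainTheorem2:
  fixes g hl ql hr qr :: real
  assumes "g > 0" and "hl > 0" and "hr > 0"
    and "froude g hl ql > 1"
    and "\<bar>froude g hr qr\<bar> < 1"
    and "(\<exists>u \<in> Nset g (hl, ql) \<inter> Pset g (hr, qr).
            fst u > 0 \<and> - fst u * sqrt (g * fst u) \<le> snd u \<and> snd u \<le> fst u * sqrt (g * fst u))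
         \<or> (hl, ql) \<in> Pset g (hr, qr)"
  shows "\<exists>h1 q1 h2 q2. h1 > 0 \<and> h2 > 0 \<and> (h1, q1) \<in> Nset g (hl, ql) \<and> (h2, q2) \<in> Pset g (hr, qr)
           \<and> q1 = q2 \<and> h1 = h2"
  using assms(6)
proof
  assume "\<exists>u \<in> Nset g (hl, ql) \<inter> Pset g (hr, qr).
            fst u > 0 \<and> - fst u * sqrt (g * fst u) \<le> snd u \<and> snd u \<le> fst u * sqrt (g * fst u)"
  then obtain h q where "(h, q) \<in> Nset g (hl, ql)" "(h, q) \<in> Pset g (hr, qr)" "h > 0"
    by auto
  then show ?thesis by blast
next
  assume "(hl, ql) \<in> Pset g (hr, qr)"
  moreover have "(hl, ql) \<in> Nset g (hl, ql)"
    using mem_Nset_self[of "(hl, ql)"] assms(2) by simp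
  ultimately show ?thesis using assms(2) by blast
qed

end
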